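(* Let $\gamma\in(0,\pi)$, $\Delta>0$, $\Sigma_0,\Theta_0\in\mathbb{R}$, and define $$u_s(x,t)=-\frac{2i\,e^{i\Sigma+\Theta+2i\gamma}\sin\gamma}{\Delta\left(e^{2\Theta+i\gamma}+1\right)},\quad \Sigma=\frac{(t-4\Delta^4x)\cos\gamma}{2\Delta^2}+\Sigma_0,\quad \Theta=\frac{(t+4\Delta^4x)\sin\gamma}{2\Delta^2}+\Theta_0.$$ Set $c_s=-\frac{1}{4\Delta^4}$, $k_s=0$, $\Omega_s=-\frac{\cos\gamma}{\Delta^2}$, $$\varphi_s(y)=\sqrt{\frac{2\sin^2\gamma}{\Delta^2\left(\cos\gamma+\cosh\left(4\Delta^2y\sin\gamma+2\Theta_0\right)\right)}}.$$ Then: (i) $|u_s(x,t)|=\varphi_s(x-c_st)$; (ii) there is a constant $\theta_{0s}\in\mathbb{R}$ such that, with $$\theta_s(y)=-\arctan\!\left(\tan\tfrac{\gamma}{2}\,\tanh\left(2\Delta^2y\sin\gamma+\Theta_0\right)\right)-\cot\gamma\,\left(2\Delta^2y\sin\gamma+\Theta_0\right)+\theta_{0s},$$ one has $u_s(x,t)=\varphi_s(x-c_st)\,e^{i\left(k_sx-\Omega_st+\theta_s(x-c_st)\right)}$ for all $x,t$; (iii) $\varphi=\varphi_s$ satisfies $\varphi_y^2=-\frac{1}{16c^2}V(\varphi)$ with $c=c_s$, $k=k_s$, $\Omega=\Omega_s$ and $A=B=0$, and $\theta_s$ satisfies $\theta_y=\frac{\varphi^4-2ck\varphi^2-2\Omega\varphi^2+4A}{4c\varphi^2}$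 with the same parameters.
   Context: Here $V(\varphi)=\varphi^{-2}\left(\varphi^8+c_3\varphi^6+c_2\varphi^4+c_1\varphi^2+c_0\right)$ with $c_3=4ck-4\Omega$, $c_2=4(c^2k^2+\Omega^2+2A+c(4-2k\Omega))$, $c_1=-32Bc$, $c_0=16A^2$. The function $u_s$ is the one-soliton solution of $u_{tx}=u-i|u|^2u_x$. *)

theory Defs
  imports "HOL-Analysis.Analysis"
begin

definition Vpot :: "real \<Rightarrow> real \<Rightarrow> real \<Rightarrow> real \<Rightarrow> real \<Rightarrow> real \<Rightarrow> real" where
  "Vpot c k \<Omega> A B \<phi> =
     (let c3 = 4*c*k - 4*\<Omega>;
          c2 = 4*(c^2*k^2 + \<Omega>^2 + 2*A + c*(4 - 2*k*\<Omega>));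
          c1 = -32*B*c;
          c0 = 16*A^2
      in \<phi> powi (-2) * (\<phi>^8 + c3*\<phi>^6 + c2*\<phi>^4 + c1*\<phi>^2 + c0))"

definition Sigma_s :: "real \<Rightarrow> real \<Rightarrow> real \<Rightarrow> real \<Rightarrow> real \<Rightarrow> real" where
  "Sigma_s \<gamma> \<Delta> Si0 x t = (t - 4*\<Delta>^4*x) * cos \<gamma> / (2*\<Delta>^2) + Si0"

definition Theta_s :: "real \<Rightarrow> real \<Rightarrow> real \<Rightarrow> real \<Rightarrow> real \<Rightarrow> real" where
  "Theta_s \<gamma> \<Delta> Th0 x t = (t + 4*\<Delta>^4*x) * sin \<gamma> / (2*\<Delta>^2) + Th0"

definition u_s :: "real \<Rightarrow> real \<Rightarrow> real \<Rightarrow> real \<Rightarrow> real \<Rightarrow> real \<Rightarrow> complex" where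
  "u_s \<gamma> \<Delta> Si0 Th0 x t =
     (let \<Sigma> = Sigma_s \<gamma> \<Delta> Si0 x t; \<Theta> = Theta_s \<gamma> \<Delta> Th0 x t in
      - (2 * \<i> * exp (\<i> * of_real \<Sigma> + of_real \<Theta> + 2 * \<i> * of_real \<gamma>) * of_real (sin \<gamma>))
      / (of_real \<Delta> * (exp (of_real (2*\<Theta>) + \<i> * of_real \<gamma>) + 1)))"

definition c_s :: "real \<Rightarrow> real" where "c_s \<Delta> = - 1 / (4*\<Delta>^4)"
definition k_s :: real where "k_s = 0"
definition Omega_s :: "real \<Rightarrow> real \<Rightarrow> real" where "Omega_s \<gamma> \<Delta> = - cos \<gamma> / \<Delta>^2"

definition phi_s :: "real \<Rightarrow> real \<Rightarrow> real \<Rightarrow> real \<Rightarrow> real" where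
  "phi_s \<gamma> \<Delta> Th0 y =
     sqrt (2 * (sin \<gamma>)^2 / (\<Delta>^2 * (cos \<gamma> + cosh (4*\<Delta>^2 * y * sin \<gamma> + 2*Th0))))"

definition theta_s :: "real \<Rightarrow> real \<Rightarrow> real \<Rightarrow> real \<Rightarrow> real \<Rightarrow> real" where
  "theta_s \<gamma> \<Delta> Th0 \<theta>0 y =
     - arctan (tan (\<gamma>/2) * tanh (2*\<Delta>^2 * y * sin \<gamma> + Th0))
     - cot \<gamma> * (2*\<Delta>^2 * y * sin \<gamma> + Th0) + \<theta>0"

end

theory Submission
  imports Defs
begin

(*
  Write h = gamma/2 and let Theta be the moving coordinate; since Theta depends on x, t
  only through y = x - c_s t, everything reduces to functions of y.

  1. Factor the denominator: exp(2 Theta + 2 i h) + 1 = 2 e^Theta e^(ih) (a + i b) with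
     a = cosh Theta cos h > 0 and b = sinh Theta sin h, and write a + i b in polar form
     r e^(i arctan(b/a)).  The key identity r^2 = a^2 + b^2 = (cos gamma + cosh 2 Theta)/2
     shows that the modulus sin gamma / (Delta r) is exactly phi_s(y); comparing arguments
     gives the phase theta_s(y) for an explicit constant theta_0s.  This yields (ii), and
     (i) follows by taking norms.
  2. The same identity a^2 + b^2 = (cos 2h + cosh 2w)/2 computes the derivative of
     arctan(tan h tanh w), hence theta_s'; the derivative of phi_s = sqrt(...) follows
     from the chain rule.
  3. With A = B = 0 the potential V reduces to a cubic in P = phi^2, and both ODEs of (iii)
     become rational identities in sin gamma, cos gamma, cosh and sinh, proved algebraically.
*)

lemma cos_plus_cosh_pos:
  fixes \<gamma> w :: real
  assumes "0 < \<gamma>" "\<gamma> < pi"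
  shows "cos \<gamma> + cosh w > 0"
proof -
  have "cos \<gamma> > -1" using assms cos_monotone_0_pi[of \<gamma> pi] by simp
  moreover have "cosh w \<ge> 1" by (rule cosh_real_ge_1)
  ultimately show ?thesis by linarith
qed

(* The squared modulus of cosh(w + i h) = cosh w cos h + i sinh w sin h, in double-angle form;
   it governs both the amplitude phi_s and the derivative of the phase theta_s. *)
lemma half_angle_cosh_sinh:
  fixes h w :: real
  shows "(cos h * cosh w)^2 + (sin h * sinh w)^2 = (cos (2*h) + cosh (2*w)) / 2"
  unfolding cos_double cosh_double power_mult_distrib
  using sin_cos_squared_add[of h] cosh_square_eq[of w] by algebra

lemma complex_polar_right_half_plane:
  fixes a b :: real
  assumes "a > 0"
  shows "Complex a b = of_real (sqrt (a^2 + b^2)) * cis (arctan (b/a))"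
proof -
  have "1 + (b/a)^2 = (a^2 + b^2) / a^2"
    using assms by (simp add: field_simps power2_eq_square)
  then have s: "sqrt (1 + (b/a)^2) = sqrt (a^2 + b^2) / a"
    using assms by (simp add: real_sqrt_divide)
  have "sqrt (a^2 + b^2) > 0" using assms by (simp add: add_pos_nonneg)
  then show ?thesis
    by (simp add: complex_eq_iff cos_arctan sin_arctan s) (use assms in \<open>simp add: field_simps\<close>)
qed

(* exp(2z) + 1 = 2 exp(z) cosh(z) for z = T + i h, written in real coordinates. *)
lemma exp_plus_one_factor:
  fixes T h :: real
  shows "exp (of_real (2*T) + \<i> * of_real (2*h)) + 1 =
     2 * of_real (exp T) * cis h * Complex (cosh T * cos h) (sinh T * sin h)"
proof -
  define z where "z = exp T * cis h"
  have z0: "z \<noteq> 0" by (simp add: z_def)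
  have "inverse z = exp (-T) * cis (-h)"
    by (simp add: z_def exp_minus flip: cis_inverse)
  then have "Complex (cosh T * cos h) (sinh T * sin h) = (z + inverse z) / 2"
    by (simp add: complex_eq_iff cosh_def sinh_def z_def algebra_simps)
  then have "2 * of_real (exp T) * cis h * Complex (cosh T * cos h) (sinh T * sin h)
      = 2 * z * ((z + inverse z) / 2)"
    by (simp only: z_def mult.assoc)
  also have "\<dots> = z * z + 1"
    using z0 by (simp add: distrib_left)
  also have "z * z = exp (of_real (2*T) + \<i> * of_real (2*h))"
  proof -
    have "z * z = of_real (exp T * exp T) * (cis h * cis h)"
      by (simp add: z_def mult_ac)
    also have "\<dots> = of_real (exp (T + T)) * cis (h + h)"
      by (simp only: exp_add cis_mult)
    also have "\<dots> = of_real (exp (2*T)) * cis (2*h)"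
      by (simp only: mult_2)
    finally show ?thesis
      by (simp add: exp_add cis_conv_exp flip: exp_of_real)
  qed
  finally show ?thesis by simp
qed

lemma soliton_denominator_polar:
  fixes \<Theta> h :: real
  assumes "cos h > 0"
  defines "a \<equiv> cosh \<Theta> * cos h" and "b \<equiv> sinh \<Theta> * sin h"
  shows "exp (of_real (2*\<Theta>) + \<i> * of_real (2*h)) + 1
     = 2 * of_real (exp \<Theta> * sqrt (a^2 + b^2)) * cis (h + arctan (b/a))"
proof -
  have "a > 0" using assms(1) by (simp add: a_def)
  have "exp (of_real (2*\<Theta>) + \<i> * of_real (2*h)) + 1 = 2 * of_real (exp \<Theta>) * cis h * Complex a b"
    unfolding exp_plus_one_factor a_def b_def ..
  also have "\<dots> = 2 * of_real (exp \<Theta>) * cis h * (of_real (sqrt (a^2 + b^2)) * cis (arctan (b/a)))"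
    using complex_polar_right_half_plane[OF \<open>a > 0\<close>] by simp
  also have "\<dots> = 2 * of_real (exp \<Theta> * sqrt (a^2 + b^2)) * (cis h * cis (arctan (b/a)))"
    by (simp add: mult_ac)
  finally show ?thesis by (simp only: cis_mult)
qed

lemma Theta_s_travelling:
  fixes \<gamma> \<Delta> Th0 x t :: real
  assumes "\<Delta> > 0"
  shows "Theta_s \<gamma> \<Delta> Th0 x t = 2*\<Delta>^2 * (x - c_s \<Delta> * t) * sin \<gamma> + Th0"
  using assms unfolding Theta_s_def c_s_def
  by (simp add: field_simps power2_eq_square) algebra

lemma phi_s_sq:
  fixes \<gamma> \<Delta> Th0 y :: real
  assumes "0 < \<gamma>" "\<gamma> < pi" "\<Delta> > 0"
  shows "(phi_s \<gamma> \<Delta> Th0 y)^2 = 2 * (sin \<gamma>)^2 / (\<Delta>^2 * (cos \<gamma> + cosh (4*\<Delta>^2 * y * sin \<gamma> + 2*Th0)))"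
  unfolding phi_s_def using cos_plus_cosh_pos[OF assms(1,2)] assms(3)
  by (intro real_sqrt_pow2 divide_nonneg_pos mult_pos_pos) auto

lemma phi_s_pos:
  fixes \<gamma> \<Delta> Th0 y :: real
  assumes "0 < \<gamma>" "\<gamma> < pi" "\<Delta> > 0"
  shows "phi_s \<gamma> \<Delta> Th0 y > 0"
  unfolding phi_s_def using cos_plus_cosh_pos[OF assms(1,2)] assms sin_gt_zero[OF assms(1,2)]
  by (intro real_sqrt_gt_zero divide_pos_pos mult_pos_pos) auto

lemma u_s_polar:
  fixes \<gamma> \<Delta> Si0 Th0 x t :: real
  assumes "0 < \<gamma>" "\<gamma> < pi" "\<Delta> > 0"
  defines "y \<equiv> x - c_s \<Delta> * t"
  defines "\<Theta> \<equiv> 2*\<Delta>^2 * y * sin \<gamma> + Th0"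
  shows "u_s \<gamma> \<Delta> Si0 Th0 x t = of_real (phi_s \<gamma> \<Delta> Th0 y)
     * cis (Sigma_s \<gamma> \<Delta> Si0 x t + 3*\<gamma>/2 - pi/2 - arctan (tan (\<gamma>/2) * tanh \<Theta>))"
proof -
  define h where "h = \<gamma>/2"
  define a where "a = cosh \<Theta> * cos h"
  define b where "b = sinh \<Theta> * sin h"
  define r where "r = sqrt (a^2 + b^2)"
  have "cos h > 0" unfolding h_def using assms(1,2) by (intro cos_gt_zero_pi) auto
  then have "a > 0" by (simp add: a_def)
  then have r_pos: "r > 0" by (simp add: r_def add_pos_nonneg)
  have modulus: "sin \<gamma> / (\<Delta> * r) = phi_s \<gamma> \<Delta> Th0 y"
  proof -
    have rr: "cos \<gamma> + cosh (4*\<Delta>^2 * y * sin \<gamma> + 2*Th0) = 2 * r^2"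
      using half_angle_cosh_sinh[of h \<Theta>]
      by (simp add: r_def a_def b_def h_def \<Theta>_def algebra_simps)
    then have "(sin \<gamma> / (\<Delta> * r))^2 = (phi_s \<gamma> \<Delta> Th0 y)^2"
      unfolding phi_s_sq[OF assms(1-3)] rr by (simp add: power_divide power_mult_distrib)
    moreover have "sin \<gamma> / (\<Delta> * r) \<ge> 0"
      using r_pos assms(3) sin_gt_zero[OF assms(1,2)] by simp
    moreover have "phi_s \<gamma> \<Delta> Th0 y \<ge> 0"
      using phi_s_pos[OF assms(1-3)] less_imp_le by blast
    ultimately show ?thesis by (simp add: power2_eq_iff_nonneg)
  qed
  have ratio: "b/a = tan (\<gamma>/2) * tanh \<Theta>"
    by (simp add: a_def b_def h_def tan_def tanh_def mult.commute)
  have den: "exp (of_real (2 * Theta_s \<gamma> \<Delta> Th0 x t) + \<i> * of_real \<gamma>) + 1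
     = 2 * of_real (exp \<Theta> * r) * cis (h + arctan (b/a))"
    using soliton_denominator_polar[OF \<open>cos h > 0\<close>, of \<Theta>]
    by (simp add: Theta_s_travelling[OF assms(3)] \<Theta>_def y_def h_def a_def b_def r_def)
  have num: "exp (\<i> * of_real (Sigma_s \<gamma> \<Delta> Si0 x t) + of_real (Theta_s \<gamma> \<Delta> Th0 x t) + 2 * \<i> * of_real \<gamma>)
     = of_real (exp \<Theta>) * cis (Sigma_s \<gamma> \<Delta> Si0 x t + 2*\<gamma>)"
    by (simp add: exp_eq_polar Theta_s_travelling[OF assms(3)] \<Theta>_def y_def)
  have phase: "- \<i> * cis (Sigma_s \<gamma> \<Delta> Si0 x t + 2*\<gamma>) / cis (h + arctan (b/a))
     = cis (Sigma_s \<gamma> \<Delta> Si0 x t + 3*\<gamma>/2 - pi/2 - arctan (tan (\<gamma>/2) * tanh \<Theta>))"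
  proof -
    have "- \<i> = cis (- pi/2)" by (simp add: complex_eq_iff)
    moreover have "Sigma_s \<gamma> \<Delta> Si0 x t + 3*\<gamma>/2 - pi/2 - arctan (tan (\<gamma>/2) * tanh \<Theta>)
        = (- pi/2 + (Sigma_s \<gamma> \<Delta> Si0 x t + 2*\<gamma>)) - (h + arctan (b/a))"
      by (simp add: h_def ratio)
    ultimately show ?thesis by (simp only: cis_mult cis_divide)
  qed
  have rearrange: "- (2 * \<i> * (of_real (exp \<Theta>) * P) * of_real (sin \<gamma>)) / (of_real \<Delta> * (2 * of_real (exp \<Theta> * r) * C))
      = of_real (sin \<gamma> / (\<Delta> * r)) * (- \<i> * P / C)" for P C :: complex
    using r_pos assms(3) by (simp add: field_simps)
  show ?thesis
    unfolding u_s_def Let_def den num rearrange modulus phase ..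
qed

lemma u_s_amplitude_phase:
  fixes \<gamma> \<Delta> Si0 Th0 x t :: real
  assumes "0 < \<gamma>" "\<gamma> < pi" "\<Delta> > 0"
  defines "\<theta>0s \<equiv> Si0 - pi/2 + 3*\<gamma>/2 + cot \<gamma> * Th0"
  defines "y \<equiv> x - c_s \<Delta> * t"
  shows "u_s \<gamma> \<Delta> Si0 Th0 x t = of_real (phi_s \<gamma> \<Delta> Th0 y) *
           exp (\<i> * of_real (k_s*x - Omega_s \<gamma> \<Delta> * t + theta_s \<gamma> \<Delta> Th0 \<theta>0s y))"
proof -
  define \<Theta> where "\<Theta> = 2*\<Delta>^2 * y * sin \<gamma> + Th0"
  have "cot \<gamma> * \<Theta> = cos \<gamma> * (t + 4*\<Delta>^4*x) / (2*\<Delta>^2) + cot \<gamma> * Th0"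
    using sin_gt_zero[OF assms(1,2)] assms(3)
    unfolding \<Theta>_def y_def c_s_def cot_def by (simp add: field_simps)
  then have "Sigma_s \<gamma> \<Delta> Si0 x t + 3*\<gamma>/2 - pi/2 - arctan (tan (\<gamma>/2) * tanh \<Theta>)
      = k_s*x - Omega_s \<gamma> \<Delta> * t + theta_s \<gamma> \<Delta> Th0 \<theta>0s y"
    unfolding theta_s_def \<Theta>_def[symmetric] Sigma_s_def Omega_s_def k_s_def \<theta>0s_def
    using assms(3) by (simp add: field_simps)
  then show ?thesis
    using u_s_polar[OF assms(1-3), of Si0 Th0 x t]
    unfolding y_def[symmetric] \<Theta>_def[symmetric] by (simp add: cis_conv_exp)
qed

lemma arctan_tan_tanh_has_derivative:
  fixes h w :: real
  assumes "cos h \<noteq> 0"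
  shows "((\<lambda>w. arctan (tan h * tanh w)) has_real_derivative
           sin (2*h) / (cos (2*h) + cosh (2*w))) (at w)"
proof -
  have ch: "cosh w \<noteq> 0" using cosh_real_pos[of w] by linarith
  define X where "X = (cos h * cosh w)^2 + (sin h * sinh w)^2"
  have X_pos: "X > 0" using assms ch by (simp add: X_def add_pos_nonneg)
  have "1 + (tan h * tanh w)^2 = X / (cos h * cosh w)^2"
    using assms ch by (simp add: X_def tan_def tanh_def field_simps power2_eq_square)
  moreover have "1 - (tanh w)^2 = ((cosh w)^2 - (sinh w)^2) / (cosh w)^2"
    using ch by (simp add: tanh_def field_simps)
  ultimately have "tan h * (1 - (tanh w)^2) / (1 + (tan h * tanh w)^2)
      = sin h * cos h * ((cosh w)^2 - (sinh w)^2) / X"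
    using assms ch X_pos
    by (simp add: tan_def power_mult_distrib) (simp add: divide_simps power2_eq_square)
  also have "\<dots> = sin (2*h) / (cos (2*h) + cosh (2*w))"
    unfolding X_def half_angle_cosh_sinh sin_double cosh_square_eq by simp
  finally have eq: "tan h * (1 - (tanh w)^2) / (1 + (tan h * tanh w)^2)
      = sin (2*h) / (cos (2*h) + cosh (2*w))" .
  show ?thesis
    by (rule derivative_eq_intros refl | simp add: ch)+ (use eq in \<open>simp add: field_simps\<close>)
qed

lemma theta_s_has_derivative:
  fixes \<gamma> \<Delta> Th0 \<theta>0 y :: real
  assumes "0 < \<gamma>" "\<gamma> < pi"
  shows "(theta_s \<gamma> \<Delta> Th0 \<theta>0 has_real_derivative
     - 2*\<Delta>^2 * (sin \<gamma>)^2 / (cos \<gamma> + cosh (4*\<Delta>^2 * y * sin \<gamma> + 2*Th0)) - 2*\<Delta>^2 * cos \<gamma>) (at y)"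
proof -
  define L where "L = (\<lambda>y. 2*\<Delta>^2 * y * sin \<gamma> + Th0)"
  have dL: "(L has_real_derivative 2*\<Delta>^2 * sin \<gamma>) (at y)"
    unfolding L_def by (auto intro!: derivative_eq_intros)
  have "cos (\<gamma>/2) > 0" using assms by (intro cos_gt_zero_pi) auto
  then have "cos (\<gamma>/2) \<noteq> 0" by simp
  from DERIV_chain2[OF arctan_tan_tanh_has_derivative[OF this] dL]
  have dF: "((\<lambda>y. arctan (tan (\<gamma>/2) * tanh (L y))) has_real_derivative
      sin \<gamma> / (cos \<gamma> + cosh (4*\<Delta>^2 * y * sin \<gamma> + 2*Th0)) * (2*\<Delta>^2 * sin \<gamma>)) (at y)"
    by (simp add: L_def algebra_simps)
  have theta: "theta_s \<gamma> \<Delta> Th0 \<theta>0 = (\<lambda>y. - arctan (tan (\<gamma>/2) * tanh (L y)) - cot \<gamma> * L y + \<theta>0)"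
    by (simp add: theta_s_def L_def fun_eq_iff)
  have "cot \<gamma> * sin \<gamma> = cos \<gamma>"
    using sin_gt_zero[OF assms] by (simp add: cot_def)
  then have derivative_value: "- (sin \<gamma> / (cos \<gamma> + cosh (4*\<Delta>^2 * y * sin \<gamma> + 2*Th0)) * (2*\<Delta>^2 * sin \<gamma>))
      - cot \<gamma> * (2*\<Delta>^2 * sin \<gamma>) + 0
      = - 2*\<Delta>^2 * (sin \<gamma>)^2 / (cos \<gamma> + cosh (4*\<Delta>^2 * y * sin \<gamma> + 2*Th0)) - 2*\<Delta>^2 * cos \<gamma>"
    by (simp add: power2_eq_square algebra_simps)
  show ?thesis
    unfolding theta
    by (rule DERIV_cong[OF DERIV_add[OF DERIV_diff[OF DERIV_minus[OF dF] DERIV_cmult[OF dL]] DERIV_const] derivative_value])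
qed

lemma phi_s_has_derivative:
  fixes \<gamma> \<Delta> Th0 y :: real
  assumes "0 < \<gamma>" "\<gamma> < pi" "\<Delta> > 0"
  defines "z \<equiv> 4*\<Delta>^2 * y * sin \<gamma> + 2*Th0"
  shows "(phi_s \<gamma> \<Delta> Th0 has_real_derivative
     - 4 * (sin \<gamma>)^3 * sinh z / ((cos \<gamma> + cosh z)^2 * phi_s \<gamma> \<Delta> Th0 y)) (at y)"
proof -
  define g where "g = (\<lambda>y. 2 * (sin \<gamma>)^2 / (\<Delta>^2 * (cos \<gamma> + cosh (4*\<Delta>^2 * y * sin \<gamma> + 2*Th0))))"
  have D_pos: "cos \<gamma> + cosh z > 0" by (rule cos_plus_cosh_pos[OF assms(1,2)])
  have dg: "(g has_real_derivative - 8 * (sin \<gamma>)^3 * sinh z / (cos \<gamma> + cosh z)^2) (at y)"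
    unfolding g_def
    apply (rule derivative_eq_intros refl)+
    using D_pos assms(3)
     apply (simp_all flip: z_def)
    apply (simp add: divide_simps power2_eq_square power3_eq_cube)
    done
  have phi: "phi_s \<gamma> \<Delta> Th0 = (\<lambda>y. sqrt (g y))" by (simp add: phi_s_def g_def fun_eq_iff)
  have "g y > 0"
    using phi_s_pos[OF assms(1-3), of Th0 y] by (simp add: phi g_def)
  from DERIV_chain2[OF DERIV_real_sqrt[OF this] dg]
  show ?thesis by (simp add: phi field_simps)
qed

lemma Vpot_without_AB:
  fixes c k \<Omega> \<phi> :: real
  assumes "\<phi> \<noteq> 0"
  shows "Vpot c k \<Omega> 0 0 \<phi> =
    (\<phi>^2)^3 + (4*c*k - 4*\<Omega>) * (\<phi>^2)^2 + 4*(c^2*k^2 + \<Omega>^2 + c*(4 - 2*k*\<Omega>)) * \<phi>^2"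
  using assms by (simp add: Vpot_def Let_def power_int_minus field_simps)

(* The amplitude ODE as a rational identity in P = phi_s^2, with D = cos gamma + cosh z and
   Sh = sinh z; it reduces to sin^2 + cos^2 = 1 and cosh^2 - sinh^2 = 1. *)
lemma soliton_amplitude_ode_identity:
  fixes \<gamma> \<Delta> D Sh :: real
  assumes "\<Delta> > 0" "sin \<gamma> \<noteq> 0" "D > 0" "(D - cos \<gamma>)^2 = Sh^2 + 1"
  defines "P \<equiv> 2 * (sin \<gamma>)^2 / (\<Delta>^2 * D)"
  defines "c \<equiv> c_s \<Delta>" and "k \<equiv> k_s" and "\<Omega> \<equiv> Omega_s \<gamma> \<Delta>"
  shows "16 * (sin \<gamma>)^6 * Sh^2 / (D^4 * P)
     = - 1 / (16*c^2) * (P^3 + (4*c*k - 4*\<Omega>) * P^2 + 4*(c^2*k^2 + \<Omega>^2 + c*(4 - 2*k*\<Omega>)) * P)"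
proof -
  have "16 * (sin \<gamma>)^6 * Sh^2 / (D^4 * P) = 8 * \<Delta>^2 * (sin \<gamma>)^4 * Sh^2 / D^3"
    using assms(1-3) by (simp add: P_def field_simps power_numeral_reduce)
  also have "\<dots> = - 1 / (16*c^2) * (P^3 + (4*c*k - 4*\<Omega>) * P^2 + 4*(c^2*k^2 + \<Omega>^2 + c*(4 - 2*k*\<Omega>)) * P)"
    using assms(1-3) unfolding P_def c_def k_def \<Omega>_def c_s_def k_s_def Omega_s_def
    apply (simp add: field_simps)
    using assms(4) sin_cos_squared_add[of \<gamma>] by algebra
  finally show ?thesis .
qed

lemma soliton_phase_ode_identity:
  fixes \<gamma> \<Delta> D :: real
  assumes "\<Delta> > 0" "sin \<gamma> \<noteq> 0" "D > 0"
  defines "P \<equiv> 2 * (sin \<gamma>)^2 / (\<Delta>^2 * D)"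
  defines "c \<equiv> c_s \<Delta>" and "k \<equiv> k_s" and "\<Omega> \<equiv> Omega_s \<gamma> \<Delta>"
  shows "- 2*\<Delta>^2 * (sin \<gamma>)^2 / D - 2*\<Delta>^2 * cos \<gamma>
     = (P^2 - 2*c*k*P - 2*\<Omega>*P + 4*0) / (4*c*P)"
  using assms(1-3) unfolding P_def c_def k_def \<Omega>_def c_s_def k_s_def Omega_s_def
  by (simp add: field_simps) algebra

lemma phi_s_ode:
  fixes \<gamma> \<Delta> Th0 y :: real
  assumes "0 < \<gamma>" "\<gamma> < pi" "\<Delta> > 0"
  defines "\<phi> \<equiv> phi_s \<gamma> \<Delta> Th0" and "c \<equiv> c_s \<Delta>"
  shows "\<phi> differentiable (at y) \<and>
         (deriv \<phi> y)^2 = - 1 / (16*c^2) * Vpot c k_s (Omega_s \<gamma> \<Delta>) 0 0 (\<phi> y)"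
proof -
  define z where "z = 4*\<Delta>^2 * y * sin \<gamma> + 2*Th0"
  have d: "(\<phi> has_real_derivative - 4 * (sin \<gamma>)^3 * sinh z / ((cos \<gamma> + cosh z)^2 * \<phi> y)) (at y)"
    unfolding \<phi>_def z_def by (rule phi_s_has_derivative[OF assms(1-3)])
  have phi_pos: "\<phi> y > 0" unfolding \<phi>_def by (rule phi_s_pos[OF assms(1-3)])
  have phi_sq: "(\<phi> y)^2 = 2 * (sin \<gamma>)^2 / (\<Delta>^2 * (cos \<gamma> + cosh z))"
    unfolding \<phi>_def z_def by (rule phi_s_sq[OF assms(1-3)])
  have "(deriv \<phi> y)^2 = 16 * (sin \<gamma>)^6 * (sinh z)^2 / ((cos \<gamma> + cosh z)^4 * (\<phi> y)^2)"
    unfolding DERIV_imp_deriv[OF d] by (simp add: power_divide power_mult_distrib flip: power_mult)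
  also have "\<dots> = - 1 / (16*c^2) * Vpot c k_s (Omega_s \<gamma> \<Delta>) 0 0 (\<phi> y)"
    unfolding Vpot_without_AB[OF phi_pos[THEN less_imp_neq, symmetric]] phi_sq c_def
    using assms(3) sin_gt_zero[OF assms(1,2)] cos_plus_cosh_pos[OF assms(1,2)]
    by (intro soliton_amplitude_ode_identity) (auto simp: cosh_square_eq)
  finally show ?thesis using d real_differentiable_def by blast
qed

lemma theta_s_ode:
  fixes \<gamma> \<Delta> Th0 \<theta>0 y :: real
  assumes "0 < \<gamma>" "\<gamma> < pi" "\<Delta> > 0"
  defines "\<phi> \<equiv> phi_s \<gamma> \<Delta> Th0" and "c \<equiv> c_s \<Delta>" and "\<Omega> \<equiv> Omega_s \<gamma> \<Delta>"
  shows "theta_s \<gamma> \<Delta> Th0 \<theta>0 differentiable (at y) \<and>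
         deriv (theta_s \<gamma> \<Delta> Th0 \<theta>0) y =
           ((\<phi> y)^4 - 2*c*k_s*(\<phi> y)^2 - 2*\<Omega>*(\<phi> y)^2 + 4*0) / (4*c*(\<phi> y)^2)"
proof -
  define D where "D = cos \<gamma> + cosh (4*\<Delta>^2 * y * sin \<gamma> + 2*Th0)"
  have d: "(theta_s \<gamma> \<Delta> Th0 \<theta>0 has_real_derivative - 2*\<Delta>^2 * (sin \<gamma>)^2 / D - 2*\<Delta>^2 * cos \<gamma>) (at y)"
    unfolding D_def by (rule theta_s_has_derivative[OF assms(1,2)])
  have phi_sq: "(\<phi> y)^2 = 2 * (sin \<gamma>)^2 / (\<Delta>^2 * D)"
    unfolding \<phi>_def D_def by (rule phi_s_sq[OF assms(1-3)])
  have phi4: "(\<phi> y)^4 = ((\<phi> y)^2)^2" by simp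
  have "deriv (theta_s \<gamma> \<Delta> Th0 \<theta>0) y =
           ((\<phi> y)^4 - 2*c*k_s*(\<phi> y)^2 - 2*\<Omega>*(\<phi> y)^2 + 4*0) / (4*c*(\<phi> y)^2)"
    unfolding DERIV_imp_deriv[OF d] phi4 phi_sq c_def \<Omega>_def
    using assms(3) sin_gt_zero[OF assms(1,2)] cos_plus_cosh_pos[OF assms(1,2)]
    by (intro soliton_phase_ode_identity) (auto simp: D_def)
  then show ?thesis using d real_differentiable_def by blast
qed

theorem mainTheorem7:
  fixes \<gamma> \<Delta> Si0 Th0 :: real
  assumes "0 < \<gamma>" "\<gamma> < pi" "\<Delta> > 0"
  defines "c \<equiv> c_s \<Delta>" and "k \<equiv> k_s" and "\<Omega> \<equiv> Omega_s \<gamma> \<Delta>"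
  defines "\<phi> \<equiv> phi_s \<gamma> \<Delta> Th0"
  shows "(\<forall>x t. cmod (u_s \<gamma> \<Delta> Si0 Th0 x t) = \<phi> (x - c*t))
    \<and> (\<exists>\<theta>0s. \<forall>x t. u_s \<gamma> \<Delta> Si0 Th0 x t =
          of_real (\<phi> (x - c*t)) *
          exp (\<i> * of_real (k*x - \<Omega>*t + theta_s \<gamma> \<Delta> Th0 \<theta>0s (x - c*t))))
    \<and> (\<forall>y. \<phi> differentiable (at y) \<and>
          (deriv \<phi> y)^2 = - 1 / (16*c^2) * Vpot c k \<Omega> 0 0 (\<phi> y))
    \<and> (\<forall>\<theta>0 y. theta_s \<gamma> \<Delta> Th0 \<theta>0 differentiable (at y) \<and>
          deriv (theta_s \<gamma> \<Delta> Th0 \<theta>0) y =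
            ((\<phi> y)^4 - 2*c*k*(\<phi> y)^2 - 2*\<Omega>*(\<phi> y)^2 + 4*0) / (4*c*(\<phi> y)^2))"
proof -
  define \<theta>0s where "\<theta>0s = Si0 - pi/2 + 3*\<gamma>/2 + cot \<gamma> * Th0"
  have polar: "\<forall>x t. u_s \<gamma> \<Delta> Si0 Th0 x t = of_real (\<phi> (x - c*t)) *
          exp (\<i> * of_real (k*x - \<Omega>*t + theta_s \<gamma> \<Delta> Th0 \<theta>0s (x - c*t)))"
    unfolding \<phi>_def c_def k_def \<Omega>_def \<theta>0s_def using u_s_amplitude_phase[OF assms(1-3)] by blast
  moreover have "\<forall>x t. cmod (u_s \<gamma> \<Delta> Si0 Th0 x t) = \<phi> (x - c*t)"
    using polar phi_s_pos[OF assms(1-3)] by (simp add: \<phi>_def norm_mult less_imp_le)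
  moreover note phi_s_ode[OF assms(1-3)] theta_s_ode[OF assms(1-3)]
  ultimately show ?thesis unfolding \<phi>_def c_def k_def \<Omega>_def by blast
qed

end
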